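(* For each $j\geq1$ there is a unique element $\Phi_j$ of the left ideal $Ay$ that is homogeneous of degree $j(N-1)$ and satisfies $\Phi_jx-x\Phi_j=x^Ny^{j-1}$. It is given by \[ \Phi_j=\frac1j\sum_{i=0}^{j-1}\binom{j}{i}c_i(N-1)\,x^{i(N-1)}y^{j-i}, \] and in particular $\Phi_1=y$ and, for $j\ge2$, $\Phi_j\equiv\frac1jy^j-\frac N2x^{N-1}y^{j-1}\pmod{F_{j-2}}$.
   Context: Let $\Bbbk$ be a field of characteristic zero and $N\geq1$ an integer. Let $A=A_N$ be the $\Bbbk$-algebra generated by $x,y$ subject to the relation $yx-xy=x^N$, graded with $x$ in degree $1$ and $y$ in degree $N-1$. For $k\ge-1$, $F_k$ is the span of the monomials $x^iy^j$ with $i\ge0$, $j\le k$. The polynomials $c_i(q)\in\mathbb Q[q]$ are defined recursively by $\sum_{i=0}^{j}\frac{(1)_{q,j+1-i}}{(j+1-i)!}\frac{c_i(q)}{i!}=\delta_{j,0}$ for all $j\ge0$, where $(a)_{k,i}=a(a+k)\cdots(a+(i-1)k)$; $c_i(N-1)$ denotes evaluation at $q=N-1$. *)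

theory Defs
  imports "HOL-Computational_Algebra.Polynomial"
begin

text \<open>Model of A_N = k<x,y>/(yx - xy - x^N).  Elements are written in the
PBW normal form sum p_l(x) y^l, represented as a 'k poly poly: the outer
variable is y, coefficients are polynomials in x.  Addition and scalar
multiplication are those of 'k poly poly; the (noncommutative) product is
the Ore-extension product for the derivation delta = x^N d/dx, i.e.
y^j p(x) = sum_k (j choose k) delta^k(p) y^(j-k), which is exactly the
normal-ordering rule forced by yx = xy + x^N.\<close>

definition delta :: "nat \<Rightarrow> 'k::field_char_0 poly \<Rightarrow> 'k poly" where
  "delta N p = monom 1 N * pderiv p"

definition amul :: "nat \<Rightarrow> 'k::field_char_0 poly poly \<Rightarrow> 'k poly poly \<Rightarrow> 'k poly poly" where
  "amul N P Q = (\<Sum>j\<le>degree P. \<Sum>k\<le>j. \<Sum>l\<le>degree Q.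
      monom (of_nat (j choose k) * coeff P j * (delta N ^^ k) (coeff Q l)) (j - k + l))"

definition mon :: "'k::field_char_0 \<Rightarrow> nat \<Rightarrow> nat \<Rightarrow> 'k poly poly" where
  "mon c i l = monom (monom c i) l"

abbreviation genX :: "'k::field_char_0 poly poly" where "genX \<equiv> mon 1 1 0"
abbreviation genY :: "'k::field_char_0 poly poly" where "genY \<equiv> mon 1 0 1"

definition in_left_ideal_Ay :: "nat \<Rightarrow> 'k::field_char_0 poly poly \<Rightarrow> bool" where
  "in_left_ideal_Ay N P \<longleftrightarrow> (\<exists>a. P = amul N a genY)"

definition homogeneous :: "nat \<Rightarrow> nat \<Rightarrow> 'k::field_char_0 poly poly \<Rightarrow> bool" where
  "homogeneous N d P \<longleftrightarrow> (\<forall>i l. coeff (coeff P l) i \<noteq> 0 \<longrightarrow> i + l * (N - 1) = d)"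

definition inF :: "nat \<Rightarrow> 'k::field_char_0 poly poly \<Rightarrow> bool" where
  "inF k P \<longleftrightarrow> (\<forall>l>k. coeff P l = 0)"

text \<open>(a)_{k,i} = a (a+k) ... (a+(i-1)k), here with a = 1 and k = q the variable.\<close>
definition gpoch1 :: "nat \<Rightarrow> rat poly" where
  "gpoch1 i = (\<Prod>m<i. [:1, of_nat m:])"

text \<open>c_j from the recursion: the i = j term equals c_j / j!, so
  c_0 = 1 and c_j = - j! * sum_{i<j} (1)_{q,j+1-i}/(j+1-i)! * c_i / i! for j > 0.\<close>
function cpoly :: "nat \<Rightarrow> rat poly" where
  "cpoly j = (if j = 0 then 1 else
     - smult (fact j) (\<Sum>i<j. smult (1 / (fact (j + 1 - i) * fact i)) (gpoch1 (j + 1 - i) * cpoly i)))"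
  by auto
termination by (relation "measure id") auto

definition cval :: "nat \<Rightarrow> nat \<Rightarrow> 'k::field_char_0" where
  "cval N i = of_rat (poly (cpoly i) (of_nat (N - 1)))"

definition Phi :: "nat \<Rightarrow> nat \<Rightarrow> 'k::field_char_0 poly poly" where
  "Phi N j = (\<Sum>i<j. mon ((1 / of_nat j) * of_nat (j choose i) * cval N i) (i * (N - 1)) (j - i))"

end

theory Submission
  imports Defs
begin

(*
  Write P = sum_l p_l(x) y^l. Right multiplication by y shifts the coefficients, so A y consists
  of the P with p_0 = 0. Moving x to the left through y^l, using
  delta^k(x) = (1)_{N-1,k} x^(1 + k(N-1)), shows that the y^m-coefficient of Px - xP is
  sum_{l>m} (l choose m) p_l delta^(l-m)(x). For L = deg P >= 1 the coefficient at m = L - 1 is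
  L p_L x^N, which is nonzero, so P |-> Px - xP is injective on A y. For Phi_j, with n = j - m, the y^m-coefficient is x^(1 + n(N-1)) times
  (1/j) (j choose n) sum_{i<n} (n choose i) c_i (1)_{N-1,n-i}, and this convolution is n! times
  the left-hand side of the recursion defining the c_i, hence vanishes unless n = 1.
*)

lemma delta_monom: "delta N (monom a e) = monom (of_nat e * a) (N + (e - 1))"
  by (simp add: delta_def pderiv_monom mult_monom)

lemma funpow_delta_0: "(delta N ^^ k) 0 = 0"
  by (induction k) (simp_all add: delta_def)

lemma funpow_delta_1: "(delta N ^^ k) 1 = (if k = 0 then 1 else 0)"
  by (induction k) (simp_all add: delta_def funpow_delta_0)

lemma amul_genY: "amul N P genY = pCons 0 P"
proof (rule poly_eqI)
  fix m
  have "amul N P genY = (\<Sum>j\<le>degree P. monom (coeff P j) (Suc j))"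
    unfolding amul_def mon_def
    by (simp add: degree_monom_eq monom_0 one_pCons[symmetric] funpow_delta_0 funpow_delta_1
        sum.atMost_shift)
  then show "coeff (amul N P genY) m = coeff (pCons 0 P) m"
    by (cases m) (auto simp: coeff_sum coeff_eq_0)
qed

lemma in_left_ideal_Ay_iff: "in_left_ideal_Ay N P \<longleftrightarrow> coeff P 0 = 0"
  unfolding in_left_ideal_Ay_def amul_genY by (metis coeff_pCons_0 pCons_cases)

lemma coeff_amul_const_left: "coeff (amul N [:q:] P) m = q * coeff P m"
  unfolding amul_def by (simp add: coeff_sum coeff_eq_0)

lemma coeff_amul_const_right:
  assumes "degree P \<le> M"
  shows "coeff (amul N P [:q:]) m = (\<Sum>j=m..M. of_nat (j choose m) * coeff P j * (delta N ^^ (j - m)) q)"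
proof -
  let ?t = "\<lambda>j. of_nat (j choose m) * coeff P j * (delta N ^^ (j - m)) q"
  have "(\<Sum>k\<le>j. if j - k = m then of_nat (j choose k) * coeff P j * (delta N ^^ k) q else 0)
        = (if m \<le> j then ?t j else 0)" for j
  proof -
    have "(\<Sum>k\<le>j. if j - k = m then of_nat (j choose k) * coeff P j * (delta N ^^ k) q else 0)
        = (\<Sum>k\<le>j. if k = j - m \<and> m \<le> j then ?t j else 0)"
      by (rule sum.cong) (auto simp: binomial_symmetric[of m j])
    then show ?thesis by simp
  qed
  then have "coeff (amul N P [:q:]) m = (\<Sum>j\<le>degree P. if m \<le> j then ?t j else 0)"
    unfolding amul_def by (simp add: coeff_sum)
  also have "\<dots> = (\<Sum>j\<le>M. if m \<le> j then ?t j else 0)"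
    by (rule sum.mono_neutral_left) (use assms in \<open>auto simp: coeff_eq_0\<close>)
  also have "\<dots> = sum ?t {j\<in>{..M}. m \<le> j}"
    by (rule sum.inter_filter[symmetric]) simp
  also have "{j\<in>{..M}. m \<le> j} = {m..M}"
    by auto
  finally show ?thesis .
qed

abbreviation acomm :: "nat \<Rightarrow> 'k::field_char_0 poly poly \<Rightarrow> 'k poly poly \<Rightarrow> 'k poly poly" where
  "acomm N P Q \<equiv> amul N P Q - amul N Q P"

lemma coeff_acomm_const:
  assumes "degree P \<le> M"
  shows "coeff (acomm N P [:q:]) m = (\<Sum>j\<in>{m<..M}. of_nat (j choose m) * coeff P j * (delta N ^^ (j - m)) q)"
proof (cases "m \<le> M")
  case True
  then have "{m..M} = insert m {m<..M}" by auto
  then show ?thesis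
    by (simp add: coeff_amul_const_right[OF assms] coeff_amul_const_left mult.commute)
next
  case False
  then show ?thesis
    using assms by (simp add: coeff_amul_const_right coeff_amul_const_left coeff_eq_0)
qed

lemma acomm_const_diff_left: "acomm N (P - Q) [:q:] = acomm N P [:q:] - acomm N Q [:q:]"
proof (rule poly_eqI)
  fix m
  define M where "M = max (degree P) (degree Q)"
  have "degree P \<le> M" "degree Q \<le> M" "degree (P - Q) \<le> M"
    using degree_diff_le_max[of P Q] by (auto simp: M_def)
  from this[THEN coeff_acomm_const[where N = N and q = q and m = m]]
  show "coeff (acomm N (P - Q) [:q:]) m = coeff (acomm N P [:q:] - acomm N Q [:q:]) m"
    by (simp only: coeff_diff[of "acomm N P [:q:]"]) (simp add: sum_subtractf algebra_simps)
qed

lemma acomm_genX_eq_0_imp: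
  fixes P :: "'k::field_char_0 poly poly"
  assumes P0: "coeff P 0 = 0" and comm: "acomm N P genX = 0"
  shows "P = 0"
proof (rule ccontr)
  assume "P \<noteq> 0"
  define L where "L = degree P"
  have "L \<noteq> 0"
    using \<open>P \<noteq> 0\<close> P0 degree_0_id[of P] by (auto simp: L_def)
  then have "{L - 1<..L} = {L}" "L choose (L - 1) = L"
    using binomial_symmetric[of 1 L] by auto
  then have "coeff (acomm N P genX) (L - 1) = of_nat L * coeff P L * monom 1 N"
    using coeff_acomm_const[of P L N "monom 1 1" "L - 1"] \<open>L \<noteq> 0\<close>
    by (simp add: L_def mon_def monom_0 delta_monom)
  also have "\<dots> \<noteq> 0"
    using \<open>P \<noteq> 0\<close> \<open>L \<noteq> 0\<close> by (simp add: L_def)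
  finally show False
    using comm by simp
qed

lemma acomm_genX_inj:
  fixes P Q :: "'k::field_char_0 poly poly"
  assumes "coeff P 0 = 0" "coeff Q 0 = 0" and "acomm N P genX = acomm N Q genX"
  shows "P = Q"
  using acomm_genX_eq_0_imp[of "P - Q" N] acomm_const_diff_left[of N P Q "monom 1 1"] assms
  by (simp add: mon_def monom_0)

definition gval :: "nat \<Rightarrow> nat \<Rightarrow> 'k::field_char_0" where
  "gval N k = of_rat (poly (gpoch1 k) (of_nat (N - 1)))"

lemma gval_Suc: "gval N (Suc k) = gval N k * of_nat (1 + k * (N - 1))"
proof -
  have "poly [:1, of_nat k:] (of_nat (N - 1)) = (of_nat (1 + k * (N - 1)) :: rat)"
    by simp
  then show ?thesis
    by (simp only: gval_def gpoch1_def prod.lessThan_Suc poly_mult of_rat_mult of_rat_of_nat_eq)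
qed

lemma funpow_delta_X:
  assumes "N \<ge> 1"
  shows "(delta N ^^ k) (monom 1 1) = monom (gval N k) (1 + k * (N - 1))"
proof (induction k)
  case 0
  then show ?case by (simp add: gval_def gpoch1_def)
next
  case (Suc k)
  have "N + (1 + k * (N - 1) - 1) = 1 + Suc k * (N - 1)"
    using assms by (cases N) auto
  with Suc show ?case
    by (simp add: delta_monom gval_Suc mult.commute)
qed

declare cpoly.simps[simp del]

lemma cpoly_0: "cpoly 0 = 1"
  by (simp add: cpoly.simps)

lemma poly_cpoly:
  "J \<noteq> 0 \<Longrightarrow> poly (cpoly J) q =
     - fact J * (\<Sum>i<J. 1 / (fact (J + 1 - i) * fact i) * (poly (gpoch1 (J + 1 - i)) q * poly (cpoly i) q))"
  by (subst cpoly.simps) (simp add: poly_sum)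

lemma cpoly_binomial_convolution:
  assumes "n \<ge> 1"
  shows "(\<Sum>i<n. of_nat (n choose i) * poly (cpoly i) q * poly (gpoch1 (n - i)) q) = (if n = 1 then 1 else 0)"
proof (cases "n = 1")
  case True
  then show ?thesis by (simp add: cpoly_0 gpoch1_def)
next
  case False
  define J where "J = n - 1"
  have n: "n = Suc J" and "J \<noteq> 0"
    using assms False by (auto simp: J_def)
  define S where "S = (\<Sum>i<J. 1 / (fact (J + 1 - i) * fact i) * (poly (gpoch1 (J + 1 - i)) q * poly (cpoly i) q))"
  have "(\<Sum>i<J. of_nat (n choose i) * poly (cpoly i) q * poly (gpoch1 (n - i)) q) = fact n * S"
    unfolding S_def sum_distrib_left
    by (intro sum.cong refl) (auto simp: n binomial_fact mult_ac)
  moreover have "poly (cpoly J) q = - fact J * S"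
    using poly_cpoly[OF \<open>J \<noteq> 0\<close>] by (simp add: S_def)
  ultimately show ?thesis
    using False by (simp add: n gpoch1_def)
qed

lemma cval_0: "cval N 0 = 1"
  by (simp add: cval_def cpoly_0)

lemma cval_1:
  assumes "N \<ge> 1"
  shows "cval N 1 = - (of_nat N / 2 :: 'k::field_char_0)"
proof -
  have "poly (cpoly 1) (of_nat (N - 1)) = - (of_nat N / 2 :: rat)"
    using assms poly_cpoly[of 1 "of_nat (N - 1)"]
    by (simp add: cpoly_0 gpoch1_def numeral_2_eq_2 field_simps)
  then show ?thesis
    by (simp add: cval_def of_rat_minus of_rat_divide)
qed

lemma cval_gval_convolution:
  assumes "n \<ge> 1"
  shows "(\<Sum>i<n. of_nat (n choose i) * cval N i * gval N (n - i)) = (if n = 1 then 1 else (0::'k::field_char_0))"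
  using arg_cong[OF cpoly_binomial_convolution[OF assms, of "of_nat (N - 1)"], of "of_rat :: rat \<Rightarrow> 'k"]
  by (simp add: of_rat_sum of_rat_mult cval_def gval_def)

definition phi_coeff :: "nat \<Rightarrow> nat \<Rightarrow> nat \<Rightarrow> 'k::field_char_0" where
  "phi_coeff N j i = 1 / of_nat j * of_nat (j choose i) * cval N i"

lemma coeff_Phi:
  "coeff (Phi N j) l = (if 0 < l \<and> l \<le> j then monom (phi_coeff N j (j - l)) ((j - l) * (N - 1)) else 0)"
proof -
  have "coeff (Phi N j) l = (\<Sum>i<j. if i = j - l \<and> 0 < l \<and> l \<le> j then monom (phi_coeff N j i) (i * (N - 1)) else 0)"
    unfolding Phi_def phi_coeff_def coeff_sum mon_def coeff_monom
    by (intro sum.cong) auto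
  then show ?thesis
    by (cases "0 < l \<and> l \<le> j") auto
qed

lemma degree_Phi: "degree (Phi N j) \<le> j"
  by (rule degree_le) (simp add: coeff_Phi)

lemma homogeneous_Phi: "homogeneous N (j * (N - 1)) (Phi N j)"
  unfolding homogeneous_def
proof (intro allI impI)
  fix i l
  assume "coeff (coeff (Phi N j) l) i \<noteq> 0"
  then have "l \<le> j" "i = (j - l) * (N - 1)"
    by (auto simp: coeff_Phi split: if_splits)
  then show "i + l * (N - 1) = j * (N - 1)"
    by (simp add: add_mult_distrib[symmetric])
qed

lemma sum_phi_coeff_gval:
  assumes "m < j"
  shows "(\<Sum>l\<in>{m<..j}. of_nat (l choose m) * phi_coeff N j (j - l) * gval N (l - m)) =
    (if m = j - 1 then 1 else (0::'k::field_char_0))"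
proof -
  define n where "n = j - m"
  have n: "1 \<le> n" "n \<le> j" "m = j - n"
    using assms by (auto simp: n_def)
  have "(\<Sum>l\<in>{m<..j}. of_nat (l choose m) * phi_coeff N j (j - l) * gval N (l - m)) =
      (\<Sum>i<n. of_nat ((j - i) choose m) * phi_coeff N j i * (gval N (n - i) :: 'k))"
    by (rule sum.reindex_bij_witness[of _ "\<lambda>i. j - i" "\<lambda>l. j - l"]) (auto simp: n_def)
  also have "\<dots> = (\<Sum>i<n. 1 / of_nat j * of_nat (j choose n) * (of_nat (n choose i) * cval N i * gval N (n - i)))"
  proof (intro sum.cong refl)
    fix i
    assume "i \<in> {..<n}"
    then have "(j - i) choose m = (j - i) choose (n - i)" "(j choose n) * (n choose i) = (j choose i) * ((j - i) choose (n - i))"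
      using n binomial_symmetric[of "n - i" "j - i"] choose_mult[of i n j] by auto
    then have binom: "of_nat (j choose i) * of_nat ((j - i) choose m) = (of_nat (j choose n) * of_nat (n choose i) :: 'k)"
      by (simp only: of_nat_mult[symmetric])
    have "of_nat ((j - i) choose m) * phi_coeff N j i * gval N (n - i) =
        1 / of_nat j * (of_nat (j choose i) * of_nat ((j - i) choose m)) * cval N i * (gval N (n - i) :: 'k)"
      by (simp add: phi_coeff_def mult_ac)
    also have "\<dots> = 1 / of_nat j * of_nat (j choose n) * (of_nat (n choose i) * cval N i * gval N (n - i))"
      by (simp only: binom mult_ac)
    finally show "of_nat ((j - i) choose m) * phi_coeff N j i * gval N (n - i) =
        1 / of_nat j * of_nat (j choose n) * (of_nat (n choose i) * cval N i * (gval N (n - i) :: 'k))" .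
  qed
  also have "\<dots> = 1 / of_nat j * of_nat (j choose n) * (if n = 1 then 1 else 0)"
    by (simp only: sum_distrib_left[symmetric] cval_gval_convolution[OF n(1)])
  also have "\<dots> = (if m = j - 1 then 1 else 0)"
    using n by auto
  finally show ?thesis .
qed

lemma acomm_Phi_genX:
  assumes "N \<ge> 1" and "j \<ge> 1"
  shows "acomm N (Phi N j) genX = (mon 1 N (j - 1) :: 'k::field_char_0 poly poly)"
proof (rule poly_eqI)
  fix m
  let ?e = "1 + (j - m) * (N - 1)"
  have "coeff (acomm N (Phi N j) genX :: 'k poly poly) m =
      (\<Sum>l\<in>{m<..j}. of_nat (l choose m) * coeff (Phi N j) l * (delta N ^^ (l - m)) (monom 1 1))"
    using coeff_acomm_const[OF degree_Phi] by (simp add: mon_def monom_0)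
  also have "\<dots> = (\<Sum>l\<in>{m<..j}. monom (of_nat (l choose m) * phi_coeff N j (j - l) * gval N (l - m)) ?e)"
  proof (intro sum.cong refl)
    fix l
    assume "l \<in> {m<..j}"
    then have "0 < l" "l \<le> j" "(j - l) * (N - 1) + (1 + (l - m) * (N - 1)) = ?e"
      by (auto simp: add_mult_distrib[symmetric])
    then show "of_nat (l choose m) * coeff (Phi N j) l * (delta N ^^ (l - m)) (monom 1 1) =
        monom (of_nat (l choose m) * phi_coeff N j (j - l) * gval N (l - m)) ?e"
      unfolding funpow_delta_X[OF assms(1)]
      by (simp add: coeff_Phi mult_monom of_nat_poly monom_0[symmetric])
  qed
  also have "\<dots> = coeff (mon 1 N (j - 1)) m"
  proof (cases "m < j")
    case True
    moreover have "m = j - 1 \<Longrightarrow> ?e = N"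
      using assms by auto
    ultimately show ?thesis
      by (auto simp: monom_sum[symmetric] sum_phi_coeff_gval mon_def)
  next
    case False
    then show ?thesis
      using assms by (simp add: mon_def)
  qed
  finally show "coeff (acomm N (Phi N j) genX) m = coeff (mon 1 N (j - 1) :: 'k poly poly) m" .
qed

lemma Phi_1: "Phi N 1 = genY"
  by (simp add: Phi_def cval_0)

lemma Phi_leading_terms:
  assumes "N \<ge> 1" and "j \<ge> 2"
  shows "inF (j - 2) ((Phi N j :: 'k::field_char_0 poly poly) - (mon (1 / of_nat j) 0 j - mon (of_nat N / 2) (N - 1) (j - 1)))"
proof -
  have "phi_coeff N j 0 = 1 / of_nat j" "phi_coeff N j 1 = (- (of_nat N / 2) :: 'k)"
    using assms cval_1[OF assms(1)] by (simp_all add: phi_coeff_def cval_0)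
  moreover have "l = j - 1 \<or> l = j \<or> j < l" if "j - 2 < l" for l
    using that by linarith
  ultimately show ?thesis
    using assms unfolding inF_def by (auto simp: coeff_Phi mon_def minus_monom)
qed

theorem lemma4p1:
  fixes N j :: nat
  assumes "N \<ge> 1" and "j \<ge> 1"
  shows "(\<exists>!P :: 'k::field_char_0 poly poly.
            in_left_ideal_Ay N P \<and> homogeneous N (j * (N - 1)) P \<and>
            amul N P genX - amul N genX P = mon 1 N (j - 1))
       \<and> (in_left_ideal_Ay N (Phi N j :: 'k poly poly) \<and>
          homogeneous N (j * (N - 1)) (Phi N j :: 'k poly poly) \<and>
          amul N (Phi N j) genX - amul N genX (Phi N j) = (mon 1 N (j - 1) :: 'k poly poly))
       \<and> (Phi N 1 :: 'k poly poly) = genY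
       \<and> (j \<ge> 2 \<longrightarrow>
            inF (j - 2) ((Phi N j :: 'k poly poly)
               - (mon (1 / of_nat j) 0 j - mon (of_nat N / 2) (N - 1) (j - 1))))"
proof -
  have Phi: "in_left_ideal_Ay N (Phi N j :: 'k poly poly) \<and> homogeneous N (j * (N - 1)) (Phi N j :: 'k poly poly) \<and>
      acomm N (Phi N j) genX = (mon 1 N (j - 1) :: 'k poly poly)"
    by (intro conjI homogeneous_Phi acomm_Phi_genX assms) (simp add: in_left_ideal_Ay_iff coeff_Phi)
  have "\<exists>!P :: 'k poly poly. in_left_ideal_Ay N P \<and> homogeneous N (j * (N - 1)) P \<and>
      acomm N P genX = mon 1 N (j - 1)"
  proof (rule ex1I[of _ "Phi N j"])
    fix P :: "'k poly poly"
    assume P: "in_left_ideal_Ay N P \<and> homogeneous N (j * (N - 1)) P \<and> acomm N P genX = mon 1 N (j - 1)"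
    show "P = Phi N j"
      by (rule acomm_genX_inj[of P "Phi N j" N]) (use P Phi in \<open>auto simp: in_left_ideal_Ay_iff\<close>)
  qed (fact Phi)
  then show ?thesis
    using Phi Phi_1 Phi_leading_terms assms by blast
qed

end
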